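(* Let $k\ge 2$ be an integer and $\widehat B=\begin{pmatrix}\hat e&\hat f\\\hat g&\hat h\end{pmatrix}\in M_2(\mathbb Z_k)$, where $e,f,g,h\in\mathbb Z$. Then $|\mathrm{Cen}_{M_2(\mathbb Z_k)}(\widehat B)|=(kd)^2$, where $d=\gcd(e-h,f,g,k)$.
   Context: $\mathbb Z_k=\mathbb Z/k\mathbb Z$, $\hat x$ the residue of $x$; $\mathrm{Cen}_S(s)=\{t\in S:ts=st\}$. *)

theory Defs
  imports Main
begin

text \<open>The ring M_2(Z_k) is modelled concretely: Z_k is represented by the canonical
residues {0..<k} of int, and a 2x2 matrix [[a,b],[c,d]] by the tuple (a,b,c,d).\<close>

type_synonym mat2 = "int \<times> int \<times> int \<times> int"

definition M2_Zk :: "int \<Rightarrow> mat2 set" where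
  "M2_Zk k = {0..<k} \<times> {0..<k} \<times> {0..<k} \<times> {0..<k}"

definition mat2_mult :: "int \<Rightarrow> mat2 \<Rightarrow> mat2 \<Rightarrow> mat2" where
  "mat2_mult k X Y = (case X of (a, b, c, d) \<Rightarrow> case Y of (a', b', c', d') \<Rightarrow>
     ((a * a' + b * c') mod k, (a * b' + b * d') mod k,
      (c * a' + d * c') mod k, (c * b' + d * d') mod k))"

definition residue_mat :: "int \<Rightarrow> int \<Rightarrow> int \<Rightarrow> int \<Rightarrow> int \<Rightarrow> mat2" where
  "residue_mat k e f g h = (e mod k, f mod k, g mod k, h mod k)"

definition Cen_M2 :: "int \<Rightarrow> mat2 \<Rightarrow> mat2 set" where
  "Cen_M2 k B = {X \<in> M2_Zk k. mat2_mult k X B = mat2_mult k B X}"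

end

theory Submission
  imports Defs
begin

(* X = [[a,b],[c,d]] commutes with B = [[e,f],[g,h]] iff the four entries of XB - BX
   vanish mod k; these entries are, up to sign, the components of the cross product
   (a-d, b, c) x (e-h, f, g).  Hence Cen(B) is in bijection with Z_k x A(w), where
   A(w) is the set of v in (Z_k)^3 with v x w = 0 mod k, w = (e-h, f, g).

   To count A(w) we use that an integer matrix M satisfies (Mx) x (My) = cof(M) (x x y),
   so a unimodular M maps A(w) bijectively onto A(Mw).  Two unimodular Bezout
   transformations move w to (d0, 0, 0) with d0 = gcd(e-h, gcd f g), and for such a
   vector A(w) = Z_k x T x T with T = {b. k | b d0}, of size gcd(d0, k).  Altogether
   |Cen(B)| = k * k * gcd(d0, k)^2 = (k d)^2. *)

type_synonym vec3 = "int \<times> int \<times> int"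

type_synonym mat3 = "vec3 \<times> vec3 \<times> vec3"

definition cross :: "vec3 \<Rightarrow> vec3 \<Rightarrow> vec3" where
  "cross x y = (case x of (x1, x2, x3) \<Rightarrow> case y of (y1, y2, y3) \<Rightarrow>
     (x2 * y3 - x3 * y2, x3 * y1 - x1 * y3, x1 * y2 - x2 * y1))"

definition dot :: "vec3 \<Rightarrow> vec3 \<Rightarrow> int" where
  "dot x y = (case x of (x1, x2, x3) \<Rightarrow> case y of (y1, y2, y3) \<Rightarrow> x1 * y1 + x2 * y2 + x3 * y3)"

definition mat_vec :: "mat3 \<Rightarrow> vec3 \<Rightarrow> vec3" where
  "mat_vec M x = (case M of (r1, r2, r3) \<Rightarrow> (dot r1 x, dot r2 x, dot r3 x))"

definition cofactor :: "mat3 \<Rightarrow> mat3" where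
  "cofactor M = (case M of ((a, b, c), (d, e, f), (g, h, i)) \<Rightarrow>
     ((e * i - f * h, f * g - d * i, d * h - e * g),
      (c * h - b * i, a * i - c * g, b * g - a * h),
      (b * f - c * e, c * d - a * f, a * e - b * d)))"

definition dvd_vec :: "int \<Rightarrow> vec3 \<Rightarrow> bool" where
  "dvd_vec k p = (case p of (p1, p2, p3) \<Rightarrow> k dvd p1 \<and> k dvd p2 \<and> k dvd p3)"

definition vec_mod :: "int \<Rightarrow> vec3 \<Rightarrow> vec3" where
  "vec_mod k x = (case x of (x1, x2, x3) \<Rightarrow> (x1 mod k, x2 mod k, x3 mod k))"

definition box3 :: "int \<Rightarrow> vec3 set" where
  "box3 k = {0..<k} \<times> {0..<k} \<times> {0..<k}"

definition cross_ann :: "int \<Rightarrow> vec3 \<Rightarrow> vec3 set" where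
  "cross_ann k w = {v \<in> box3 k. dvd_vec k (cross v w)}"

lemma cross_mat_vec: "cross (mat_vec M x) (mat_vec M y) = mat_vec (cofactor M) (cross x y)"
proof -
  obtain a b c d e f g h i where M: "M = ((a, b, c), (d, e, f), (g, h, i))"
    by (metis prod.exhaust)
  obtain x1 x2 x3 where x: "x = (x1, x2, x3)" by (metis prod.exhaust)
  obtain y1 y2 y3 where y: "y = (y1, y2, y3)" by (metis prod.exhaust)
  show ?thesis unfolding M x y cross_def mat_vec_def cofactor_def dot_def
    by simp algebra
qed

lemma dvd_vec_mat_vec: "dvd_vec k p \<Longrightarrow> dvd_vec k (mat_vec M p)"
  by (cases M; cases p) (auto simp: dvd_vec_def mat_vec_def dot_def)

lemma dvd_vec_cross_vec_mod: "dvd_vec k (cross (vec_mod k x) y) = dvd_vec k (cross x y)"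
proof -
  have "((a mod k) * y - (b mod k) * z) mod k = (a * y - b * z) mod k" for a b y z :: int
    by (intro mod_diff_cong mod_mult_cong) simp_all
  then show ?thesis
    by (cases x; cases y) (simp add: dvd_vec_def cross_def vec_mod_def dvd_eq_mod_eq_0)
qed

lemma vec_mod_mat_vec_vec_mod: "vec_mod k (mat_vec M (vec_mod k x)) = vec_mod k (mat_vec M x)"
proof -
  have "(r1 * (a mod k) + r2 * (b mod k) + r3 * (c mod k)) mod k
          = (r1 * a + r2 * b + r3 * c) mod k" for r1 r2 r3 a b c :: int
    by (intro mod_add_cong mod_mult_cong) simp_all
  then show ?thesis
    by (cases M; cases x) (simp add: vec_mod_def mat_vec_def dot_def split: prod.splits)
qed

lemma vec_mod_in_box3: "k > 0 \<Longrightarrow> vec_mod k x \<in> box3 k"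
  by (cases x) (simp add: vec_mod_def box3_def)

lemma vec_mod_box3: "x \<in> box3 k \<Longrightarrow> vec_mod k x = x"
  by (cases x) (auto simp: vec_mod_def box3_def)

lemma mat_vec_cross_ann:
  assumes "k > 0" and "v \<in> cross_ann k w"
  shows "vec_mod k (mat_vec M v) \<in> cross_ann k (mat_vec M w)"
proof -
  have "dvd_vec k (cross v w)" using assms(2) by (simp add: cross_ann_def)
  then have "dvd_vec k (cross (mat_vec M v) (mat_vec M w))"
    by (simp only: cross_mat_vec dvd_vec_mat_vec)
  then show ?thesis
    using vec_mod_in_box3[OF assms(1)] by (simp add: cross_ann_def dvd_vec_cross_vec_mod)
qed

lemma card_cross_ann_unimodular:
  assumes k: "k > 0"
    and AB: "\<And>x. mat_vec A (mat_vec B x) = x" and BA: "\<And>x. mat_vec B (mat_vec A x) = x"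
  shows "card (cross_ann k w) = card (cross_ann k (mat_vec A w))"
proof -
  have "bij_betw (\<lambda>v. vec_mod k (mat_vec A v)) (cross_ann k w) (cross_ann k (mat_vec A w))"
  proof (rule bij_betw_byWitness[where f' = "\<lambda>v. vec_mod k (mat_vec B v)"])
    show "\<forall>v\<in>cross_ann k w. vec_mod k (mat_vec B (vec_mod k (mat_vec A v))) = v"
      using vec_mod_mat_vec_vec_mod BA vec_mod_box3 unfolding cross_ann_def by auto
    show "\<forall>v\<in>cross_ann k (mat_vec A w). vec_mod k (mat_vec A (vec_mod k (mat_vec B v))) = v"
      using vec_mod_mat_vec_vec_mod AB vec_mod_box3 unfolding cross_ann_def by auto
    show "(\<lambda>v. vec_mod k (mat_vec A v)) ` cross_ann k w \<subseteq> cross_ann k (mat_vec A w)"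
      using mat_vec_cross_ann[OF k] by blast
    show "(\<lambda>v. vec_mod k (mat_vec B v)) ` cross_ann k (mat_vec A w) \<subseteq> cross_ann k w"
      using mat_vec_cross_ann[OF k, of _ "mat_vec A w" B] by (auto simp: BA)
  qed
  then show ?thesis by (rule bij_betw_same_card)
qed

lemma bezout_unimodular:
  fixes x y :: int
  obtains p q r s where "p * s - q * r = 1" "p * x + q * y = gcd x y" "r * x + s * y = 0"
proof (cases "gcd x y = 0")
  case True
  then show ?thesis by (intro that[of 1 1 0 0]) simp_all
next
  case False
  define d where "d = gcd x y"
  obtain p q where pq: "p * x + q * y = d" unfolding d_def using bezout_int by blast
  obtain x' y' where x': "x = d * x'" and y': "y = d * y'"
    unfolding d_def by (meson gcd_dvd1 gcd_dvd2 dvd_def)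
  have "d * (p * x' + q * y') = d * 1" using pq x' y' by (simp add: algebra_simps)
  moreover have "d \<noteq> 0" using False d_def by simp
  ultimately have "p * x' + q * y' = 1" by simp
  moreover have "- y' * x + x' * y = 0" using x' y' by (simp add: algebra_simps)
  ultimately show ?thesis using pq d_def by (intro that[of p x' q "- y'"]) (simp_all add: algebra_simps)
qed

lemma card_cross_ann_reduce_23:
  assumes "k > 0"
  shows "card (cross_ann k (x, y, z)) = card (cross_ann k (x, gcd y z, 0))"
proof -
  obtain p q r s where det: "p * s - q * r = 1"
    and row1: "p * y + q * z = gcd y z" and row2: "r * y + s * z = 0"
    by (rule bezout_unimodular)
  define A :: mat3 where "A = ((1, 0, 0), (0, p, q), (0, r, s))"
  define B :: mat3 where "B = ((1, 0, 0), (0, s, - q), (0, - r, p))"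
  have "mat_vec A (mat_vec B (a, b, c)) = (a, b, c)" "mat_vec B (mat_vec A (a, b, c)) = (a, b, c)"
    for a b c
    using det by (simp_all add: A_def B_def mat_vec_def dot_def, (intro conjI; algebra)+)
  then have "mat_vec A (mat_vec B v) = v" "mat_vec B (mat_vec A v) = v" for v
    by (metis prod_cases3)+
  moreover have "mat_vec A (x, y, z) = (x, gcd y z, 0)"
    using row1 row2 by (simp add: A_def mat_vec_def dot_def)
  ultimately show ?thesis using card_cross_ann_unimodular[OF assms] by metis
qed

lemma card_cross_ann_reduce_12:
  assumes "k > 0"
  shows "card (cross_ann k (x, y, 0)) = card (cross_ann k (gcd x y, 0, 0))"
proof -
  obtain p q r s where det: "p * s - q * r = 1"
    and row1: "p * x + q * y = gcd x y" and row2: "r * x + s * y = 0"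
    by (rule bezout_unimodular)
  define A :: mat3 where "A = ((p, q, 0), (r, s, 0), (0, 0, 1))"
  define B :: mat3 where "B = ((s, - q, 0), (- r, p, 0), (0, 0, 1))"
  have "mat_vec A (mat_vec B (a, b, c)) = (a, b, c)" "mat_vec B (mat_vec A (a, b, c)) = (a, b, c)"
    for a b c
    using det by (simp_all add: A_def B_def mat_vec_def dot_def, (intro conjI; algebra)+)
  then have "mat_vec A (mat_vec B v) = v" "mat_vec B (mat_vec A v) = v" for v
    by (metis prod_cases3)+
  moreover have "mat_vec A (x, y, 0) = (gcd x y, 0, 0)"
    using row1 row2 by (simp add: A_def mat_vec_def dot_def)
  ultimately show ?thesis using card_cross_ann_unimodular[OF assms] by metis
qed

text \<open>The residues b mod k with k | b n are exactly the multiples of k / gcd n k.\<close>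
lemma card_annihilator_mod:
  fixes n k :: int
  assumes k: "k > 0"
  shows "card {b \<in> {0..<k}. k dvd b * n} = nat (gcd n k)"
proof -
  define d where "d = gcd n k"
  have d0: "d > 0" using k d_def by (simp add: gcd_pos_int)
  obtain k' where k': "k = d * k'" unfolding d_def by (meson gcd_dvd2 dvd_def)
  obtain n' where n': "n = d * n'" unfolding d_def by (meson gcd_dvd1 dvd_def)
  have k'0: "k' > 0" using k d0 k' by (simp add: zero_less_mult_iff)
  have "coprime (n div d) (k div d)" unfolding d_def using k by (intro div_gcd_coprime) simp
  then have cop: "coprime k' n'" using n' k' d0 by (simp add: coprime_commute)
  have dvd_iff: "k dvd b * n \<longleftrightarrow> k' dvd b" for b
  proof -
    have "k dvd b * n \<longleftrightarrow> k' dvd b * n'" using k' n' d0 by (simp add: algebra_simps)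
    also have "\<dots> \<longleftrightarrow> k' dvd b" using cop by (simp add: coprime_dvd_mult_left_iff)
    finally show ?thesis .
  qed
  have "{b \<in> {0..<k}. k dvd b * n} = (\<lambda>i. k' * i) ` {0..<d}"
  proof (rule set_eqI)
    fix b
    have "b \<in> {0..<k} \<and> k' dvd b \<longleftrightarrow> (\<exists>i\<in>{0..<d}. b = k' * i)"
      using k' k'0 by (auto simp: dvd_def zero_le_mult_iff mult.commute[of d])
    then show "b \<in> {b \<in> {0..<k}. k dvd b * n} \<longleftrightarrow> b \<in> (\<lambda>i. k' * i) ` {0..<d}"
      by (auto simp: dvd_iff)
  qed
  moreover have "inj_on (\<lambda>i. k' * i) {0..<d}" using k'0 by (auto simp: inj_on_def)
  ultimately show ?thesis using d_def by (simp add: card_image)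
qed

text \<open>For w = (n, 0, 0) the condition v x w = 0 mod k constrains only v2 and v3, independently.\<close>
lemma card_cross_ann_axis:
  assumes k: "k > 0"
  shows "int (card (cross_ann k (n, 0, 0))) = k * gcd n k ^ 2"
proof -
  define T where "T = {b \<in> {0..<k}. k dvd b * n}"
  have "cross_ann k (n, 0, 0) = {0..<k} \<times> T \<times> T"
    unfolding cross_ann_def T_def box3_def by (auto simp: dvd_vec_def cross_def mult.commute)
  then show ?thesis
    using card_annihilator_mod[OF k, of n] k
    by (simp add: T_def card_cartesian_product power2_eq_square)
qed

lemma card_cross_ann:
  assumes k: "k > 0"
  shows "int (card (cross_ann k (x, y, z))) = k * gcd (gcd x (gcd y z)) k ^ 2"
  using card_cross_ann_reduce_23[OF k] card_cross_ann_reduce_12[OF k] card_cross_ann_axis[OF k]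
  by metis

lemma mat2_commute_iff_cross:
  "mat2_mult k (a, b, c, d) (e, f, g, h) = mat2_mult k (e, f, g, h) (a, b, c, d)
     \<longleftrightarrow> dvd_vec k (cross (a - d, b, c) (e - h, f, g))"
proof -
  have entries: "a * e + b * g - (e * a + f * c) = b * g - c * f"
    "a * f + b * h - (e * b + f * d) = (a - d) * f - b * (e - h)"
    "c * e + d * g - (g * a + h * c) = c * (e - h) - (a - d) * g"
    "c * f + d * h - (g * b + h * d) = - (b * g - c * f)"
    by (simp_all add: algebra_simps)
  have "mat2_mult k (a, b, c, d) (e, f, g, h) = mat2_mult k (e, f, g, h) (a, b, c, d)
     \<longleftrightarrow> k dvd b * g - c * f \<and> k dvd (a - d) * f - b * (e - h)
       \<and> k dvd c * (e - h) - (a - d) * g \<and> k dvd - (b * g - c * f)"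
    unfolding mat2_mult_def by (simp only: prod.case prod.inject mod_eq_dvd_iff entries)
  then show ?thesis unfolding cross_def dvd_vec_def by (auto simp: dvd_diff_commute[of k "c * f"])
qed

lemma mat2_mult_residue_right:
  "mat2_mult k X (residue_mat k e f g h) = mat2_mult k X (e, f, g, h)"
proof -
  have "(a * (e mod k) + b * (g mod k)) mod k = (a * e + b * g) mod k" for a b e g :: int
    by (intro mod_add_cong mod_mult_cong) simp_all
  then show ?thesis by (cases X) (simp add: mat2_mult_def residue_mat_def)
qed

lemma mat2_mult_residue_left:
  "mat2_mult k (residue_mat k e f g h) X = mat2_mult k (e, f, g, h) X"
proof -
  have "((e mod k) * a + (g mod k) * b) mod k = (e * a + g * b) mod k" for a b e g :: int
    by (intro mod_add_cong mod_mult_cong) simp_all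
  then show ?thesis by (cases X) (simp add: mat2_mult_def residue_mat_def)
qed

lemma Cen_M2_residue_iff:
  "(a, b, c, d) \<in> Cen_M2 k (residue_mat k e f g h)
     \<longleftrightarrow> (a, b, c, d) \<in> M2_Zk k \<and> dvd_vec k (cross (a - d, b, c) (e - h, f, g))"
  by (simp add: Cen_M2_def mat2_mult_residue_left mat2_mult_residue_right mat2_commute_iff_cross)

lemma dvd_vec_cross_mod_first:
  "dvd_vec k (cross (x mod k, b, c) w) = dvd_vec k (cross (x, b, c) w)"
  using dvd_vec_cross_vec_mod[of k "(x, b, c)" w] dvd_vec_cross_vec_mod[of k "(x mod k, b, c)" w]
  by (simp add: vec_mod_def)

text \<open>Centralizer elements (a, b, c, d) correspond to pairs (d, ((a - d) mod k, b, c)).\<close>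
lemma card_Cen_M2:
  assumes k: "k > 0"
  shows "card (Cen_M2 k (residue_mat k e f g h)) = nat k * card (cross_ann k (e - h, f, g))"
proof -
  let ?C = "Cen_M2 k (residue_mat k e f g h)" and ?A = "cross_ann k (e - h, f, g)"
  define \<phi> where "\<phi> = (\<lambda>(a :: int, b :: int, c :: int, d :: int). (d, (a - d) mod k, b, c))"
  define \<psi> where "\<psi> = (\<lambda>(d :: int, u :: int, b :: int, c :: int). ((u + d) mod k, b, c, d))"
  have C_iff: "(a, b, c, d) \<in> ?C \<longleftrightarrow> d \<in> {0..<k} \<and> a \<in> {0..<k} \<and> ((a - d) mod k, b, c) \<in> ?A"
    for a b c d
    using k by (auto simp: Cen_M2_residue_iff M2_Zk_def cross_ann_def box3_def
        dvd_vec_cross_mod_first)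
  have "bij_betw \<phi> ?C ({0..<k} \<times> ?A)"
  proof (rule bij_betw_byWitness[where f' = \<psi>])
    show "\<forall>X\<in>?C. \<psi> (\<phi> X) = X"
      by (auto simp: \<phi>_def \<psi>_def C_iff mod_add_left_eq)
    show "\<forall>Y\<in>{0..<k} \<times> ?A. \<phi> (\<psi> Y) = Y"
      by (auto simp: \<phi>_def \<psi>_def cross_ann_def box3_def mod_diff_left_eq)
    show "\<phi> ` ?C \<subseteq> {0..<k} \<times> ?A"
      by (auto simp: \<phi>_def C_iff)
    show "\<psi> ` ({0..<k} \<times> ?A) \<subseteq> ?C"
      using k by (auto simp: \<psi>_def C_iff cross_ann_def box3_def mod_diff_left_eq)
  qed
  then show ?thesis by (simp add: bij_betw_same_card card_cartesian_product)
qed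

theorem corollary3p9:
  fixes k e f g h :: int
  assumes "k \<ge> 2"
  shows "int (card (Cen_M2 k (residue_mat k e f g h)))
           = (k * gcd (gcd (gcd (e - h) f) g) k) ^ 2"
proof -
  have k: "k > 0" using assms by simp
  have "int (card (Cen_M2 k (residue_mat k e f g h)))
          = k * int (card (cross_ann k (e - h, f, g)))"
    using card_Cen_M2[OF k] k by simp
  also have "\<dots> = k * (k * gcd (gcd (e - h) (gcd f g)) k ^ 2)"
    by (simp add: card_cross_ann[OF k])
  also have "\<dots> = (k * gcd (gcd (gcd (e - h) f) g) k) ^ 2"
    by (simp add: gcd.assoc power2_eq_square algebra_simps)
  finally show ?thesis .
qed

end
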